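(* Let $G=(V,E)$ be a connected graph with $n$ vertices, $\tau$ a set of types, $f:\tau\to\mathbb{Q}_{\ge1}$ a fitness function, $\alpha\in\tau^+(f)$, and $D\in\mathcal D(G,\tau)$. Then $\pi_\alpha(G,\tau,f,D)\ge 1/n$.
   Context: $\tau^+(f)=\{i\in\tau: f(i)=\max_{j\in\tau}f(j)\}$. For $G=(V,E)$, $N(v)$ is the neighbourhood of $v$. $\Omega$ is the set of functions $V\to\tau$; for $S\in\Omega$, $S|_{v\to w}$ equals $S$ except $w$ gets type $S(v)$. The Moran process $M(G,\tau,f,M_0)$: Markov chain on $\Omega$ from $M_0$; given $M_t$, choose $v$ with probability $f(M_t(v))/\sum_uf(M_t(u))$, then $w\in N(v)$ uniformly, set $M_{t+1}=M_t|_{v\to w}$. $\pi_j(G,\tau,f,M_0)$ is the probability that eventually all vertices have type $j$, and $\pi_j(G,\tau,f,D)=\sum_{M_0}\Pr_D(M_0)\pi_j(G,\tau,f,M_0)$. With $k=|\tau|$, $V[k]$ is the set of $k$-tuples of distinct vertices, $\tau[k]$ the set of $k$-tuples of distinct types, $\Omega(\mathbf u,\boldsymbol\gamma)$ the set of states mapping the $i$-th entry of $\mathbf u$ to the $i$-th entry of $\boldsymbol\gamma$ for all $i$. $\mathcal D(G,\tau)$ is the set of distributions $D$ on $\Omega$ for which there are distributions $D_{\mathbf u,\boldsymbol\gamma}$ on $\Omega(\mathbf u,\boldsymbol\gamma)$ with $\Pr_D(S)=\frac{1}{|V[k]\times\tau[k]|}\sum_{(\mathbf u,\boldsymbol\gamma)\in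 V[k]\times\tau[k]}\Pr_{D_{\mathbf u,\boldsymbol\gamma}}(S)$ for all $S$. *)

theory Defs
  imports "HOL-Probability.Probability"
begin

definition graph :: "'v set \<Rightarrow> ('v \<Rightarrow> 'v \<Rightarrow> bool) \<Rightarrow> bool" where
  "graph V E \<longleftrightarrow> finite V \<and> (\<forall>u v. E u v \<longrightarrow> u \<in> V \<and> v \<in> V \<and> E v u \<and> u \<noteq> v)"

definition connected_graph :: "'v set \<Rightarrow> ('v \<Rightarrow> 'v \<Rightarrow> bool) \<Rightarrow> bool" where
  "connected_graph V E \<longleftrightarrow> graph V E \<and> V \<noteq> {} \<and>
     (\<forall>u\<in>V. \<forall>v\<in>V. (\<lambda>x y. x \<in> V \<and> y \<in> V \<and> E x y)\<^sup>*\<^sup>* u v)"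

definition nbhd :: "'v set \<Rightarrow> ('v \<Rightarrow> 'v \<Rightarrow> bool) \<Rightarrow> 'v \<Rightarrow> 'v set" where
  "nbhd V E v = {w \<in> V. E v w}"

definition fittest :: "'t set \<Rightarrow> ('t \<Rightarrow> real) \<Rightarrow> 't set" where
  "fittest \<tau> f = {i \<in> \<tau>. \<forall>j\<in>\<tau>. f j \<le> f i}"

definition states :: "'v set \<Rightarrow> 't set \<Rightarrow> ('v \<Rightarrow> 't) set" where
  "states V \<tau> = V \<rightarrow>\<^sub>E \<tau>"

text \<open>A vertex v is chosen with
  probability f(S v) / (sum of fitnesses), then a neighbour w of v uniformly,
  and S' = S with w receiving type S v.  (Convention: if v has no neighbours,
  which only happens for the one-vertex connected graph, the state is unchanged.)\<close>
definition moran_trans ::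
  "'v set \<Rightarrow> ('v \<Rightarrow> 'v \<Rightarrow> bool) \<Rightarrow> ('t \<Rightarrow> real) \<Rightarrow> ('v \<Rightarrow> 't) \<Rightarrow> ('v \<Rightarrow> 't) \<Rightarrow> real" where
  "moran_trans V E f S S' =
     (\<Sum>v\<in>V. f (S v) / (\<Sum>u\<in>V. f (S u)) *
        (if nbhd V E v = {} then (if S' = S then 1 else 0)
         else (\<Sum>w\<in>nbhd V E v. (if S' = S(w := S v) then 1 else 0) / real (card (nbhd V E v)))))"

fun moran_pt ::
  "'v set \<Rightarrow> ('v \<Rightarrow> 'v \<Rightarrow> bool) \<Rightarrow> 't set \<Rightarrow> ('t \<Rightarrow> real) \<Rightarrow> nat \<Rightarrow> ('v \<Rightarrow> 't) \<Rightarrow> ('v \<Rightarrow> 't) \<Rightarrow> real" where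
  "moran_pt V E \<tau> f 0 S0 S = (if S = S0 then 1 else 0)"
| "moran_pt V E \<tau> f (Suc t) S0 S =
     (\<Sum>R\<in>states V \<tau>. moran_pt V E \<tau> f t S0 R * moran_trans V E f R S)"

text \<open>Fixation probability of type j from initial state M0: the probability that
  eventually all vertices have type j. Since the monochromatic state is absorbing,
  this is the limit of Pr(M_t is monochromatic j) as t \<rightarrow> \<infinity>.\<close>
definition fix_prob ::
  "'v set \<Rightarrow> ('v \<Rightarrow> 'v \<Rightarrow> bool) \<Rightarrow> 't set \<Rightarrow> ('t \<Rightarrow> real) \<Rightarrow> 't \<Rightarrow> ('v \<Rightarrow> 't) \<Rightarrow> real" where
  "fix_prob V E \<tau> f j M0 = lim (\<lambda>t. moran_pt V E \<tau> f t M0 (\<lambda>v\<in>V. j))"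

definition fix_prob_dist ::
  "'v set \<Rightarrow> ('v \<Rightarrow> 'v \<Rightarrow> bool) \<Rightarrow> 't set \<Rightarrow> ('t \<Rightarrow> real) \<Rightarrow> 't \<Rightarrow> ('v \<Rightarrow> 't) pmf \<Rightarrow> real" where
  "fix_prob_dist V E \<tau> f j D = (\<Sum>M0\<in>states V \<tau>. pmf D M0 * fix_prob V E \<tau> f j M0)"

definition dtuples :: "'a set \<Rightarrow> nat \<Rightarrow> 'a list set" where
  "dtuples A k = {xs. length xs = k \<and> distinct xs \<and> set xs \<subseteq> A}"

definition states_fixed :: "'v set \<Rightarrow> 't set \<Rightarrow> 'v list \<Rightarrow> 't list \<Rightarrow> ('v \<Rightarrow> 't) set" where
  "states_fixed V \<tau> u \<gamma> = {S \<in> states V \<tau>. \<forall>i<length u. S (u ! i) = \<gamma> ! i}"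

definition init_dists :: "'v set \<Rightarrow> 't set \<Rightarrow> ('v \<Rightarrow> 't) pmf set" where
  "init_dists V \<tau> = {D. \<exists>Df :: 'v list \<Rightarrow> 't list \<Rightarrow> ('v \<Rightarrow> 't) pmf.
      (\<forall>u\<in>dtuples V (card \<tau>). \<forall>\<gamma>\<in>dtuples \<tau> (card \<tau>). set_pmf (Df u \<gamma>) \<subseteq> states_fixed V \<tau> u \<gamma>) \<and>
      (\<forall>S. pmf D S = (1 / real (card (dtuples V (card \<tau>) \<times> dtuples \<tau> (card \<tau>)))) *
          (\<Sum>(u, \<gamma>)\<in>dtuples V (card \<tau>) \<times> dtuples \<tau> (card \<tau>). pmf (Df u \<gamma>) S))}"

end

theory Submission
  imports Defs
begin

(* For a fittest type alpha, the potential Phi(S) = sum of 1/deg v over the vertices v of type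
   alpha is a submartingale of the Moran process: the expected one-step change of Phi is a sum
   over edges {v, w} with S v = alpha <> S w of (f alpha - f (S w)) / (deg v * deg w), divided
   by the total fitness, because each of the two invasions along the edge is weighted by the
   inverse degree of the other endpoint.  From every state in which alpha is present, fixation
   of alpha happens within n steps with probability at least (1/n^2)^n, so the process is
   absorbed almost surely; as Phi <= Z = sum of all 1/deg v and Phi = 0 once alpha is extinct,
   the fixation probability from M0 is at least Phi(M0) / Z.  Finally, under D in D(G, tau) the
   vertex initially carrying alpha is uniformly distributed over V, so the expectation of
   Phi(M0) is at least Z / n. *)

lemma connected_graph_edge_across:
  assumes "connected_graph V E" and "x \<in> V" "P x" and "y \<in> V" "\<not> P y"
  shows "\<exists>v w. v \<in> V \<and> w \<in> nbhd V E v \<and> P v \<and> \<not> P w"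
proof -
  have "(\<lambda>x y. x \<in> V \<and> y \<in> V \<and> E x y)\<^sup>*\<^sup>* x y"
    using assms by (simp add: connected_graph_def)
  then show ?thesis
    using \<open>\<not> P y\<close>
  proof (induction rule: rtranclp_induct)
    case base
    with \<open>P x\<close> show ?case by simp
  next
    case (step z z')
    then show ?case by (cases "P z") (auto simp: nbhd_def)
  qed
qed

lemma sum_nbhd_swap:
  assumes "graph V E"
  shows "(\<Sum>v\<in>V. \<Sum>w\<in>nbhd V E v. h v w) = (\<Sum>v\<in>V. \<Sum>w\<in>nbhd V E v. h w v)"
proof -
  have "finite V" and sym: "\<And>v w. E v w \<Longrightarrow> E w v"
    using assms by (auto simp: graph_def)
  then have "(\<Sum>v\<in>V. \<Sum>w\<in>nbhd V E v. h v w) = (\<Sum>w\<in>V. \<Sum>v | v \<in> V \<and> E v w. h v w)"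
    using sum.swap_restrict[of V V h E] by (simp add: nbhd_def)
  also have "\<dots> = (\<Sum>w\<in>V. \<Sum>v\<in>nbhd V E w. h v w)"
    using sym by (auto simp: nbhd_def intro!: sum.cong)
  finally show ?thesis .
qed

lemma finite_dtuples: "finite A \<Longrightarrow> finite (dtuples A k)"
  unfolding dtuples_def
  by (rule finite_subset[OF _ finite_lists_length_eq[of A k]]) auto

lemma dtuples_nth_in: "u \<in> dtuples A k \<Longrightarrow> i < k \<Longrightarrow> u ! i \<in> A"
  unfolding dtuples_def by auto

lemma dtuples_card_index:
  assumes "finite A" and "\<gamma> \<in> dtuples A (card A)" and "a \<in> A"
  shows "\<exists>i < card A. \<gamma> ! i = a"
proof -
  have "set \<gamma> = A" "length \<gamma> = card A"
    using assms(1,2) distinct_card[of \<gamma>] by (auto simp: dtuples_def card_subset_eq)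
  then have "a \<in> set \<gamma>" "length \<gamma> = card A" using \<open>a \<in> A\<close> by simp_all
  then show ?thesis by (simp add: in_set_conv_nth)
qed

lemma card_dtuples_nth_eq:
  assumes "i < k" and "v \<in> A" and "v' \<in> A"
  shows "card {u \<in> dtuples A k. u ! i = v} = card {u \<in> dtuples A k. u ! i = v'}"
proof (rule bij_betw_same_card[of "map (Transposition.transpose v v')"],
       rule bij_betw_byWitness[where f' = "map (Transposition.transpose v v')"])
  let ?t = "Transposition.transpose v v'"
  have map_in: "map ?t u \<in> dtuples A k" if "u \<in> dtuples A k" for u
  proof -
    have "set (map ?t u) \<subseteq> ?t ` A" using that by (auto simp: dtuples_def)
    also have "?t ` A = A" using assms by simp
    finally show ?thesis
      using that by (simp add: dtuples_def distinct_map)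
  qed
  have nth_map: "map ?t u ! i = ?t (u ! i)" if "u \<in> dtuples A k" for u
    using that \<open>i < k\<close> by (simp add: dtuples_def)
  show "\<forall>u\<in>{u \<in> dtuples A k. u ! i = v}. map ?t (map ?t u) = u"
    and "\<forall>u\<in>{u \<in> dtuples A k. u ! i = v'}. map ?t (map ?t u) = u"
    by simp_all
  show "map ?t ` {u \<in> dtuples A k. u ! i = v} \<subseteq> {u \<in> dtuples A k. u ! i = v'}"
    and "map ?t ` {u \<in> dtuples A k. u ! i = v'} \<subseteq> {u \<in> dtuples A k. u ! i = v}"
    using map_in nth_map by auto
qed
lemma sum_dtuples_nth:
  fixes g :: "'a \<Rightarrow> real"
  assumes "finite A" and "A \<noteq> {}" and "i < k"
  shows "(\<Sum>u\<in>dtuples A k. g (u ! i)) = card (dtuples A k) / card A * (\<Sum>v\<in>A. g v)"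
proof -
  obtain v0 where v0: "v0 \<in> A" using assms(2) by auto
  define c where "c = real (card {u \<in> dtuples A k. u ! i = v0})"
  have fiber: "real (card {u \<in> dtuples A k. u ! i = v}) = c" if "v \<in> A" for v
    using card_dtuples_nth_eq[OF \<open>i < k\<close> that v0] by (simp add: c_def)
  have group: "(\<Sum>u\<in>dtuples A k. h (u ! i)) = (\<Sum>v\<in>A. c * h v)" for h :: "'a \<Rightarrow> real"
  proof -
    have "(\<lambda>u. u ! i) ` dtuples A k \<subseteq> A" using dtuples_nth_in \<open>i < k\<close> by blast
    then have "(\<Sum>u\<in>dtuples A k. h (u ! i)) = (\<Sum>v\<in>A. \<Sum>u\<in>{u \<in> dtuples A k. u ! i = v}. h (u ! i))"
      by (rule sum.group[symmetric, OF finite_dtuples[OF \<open>finite A\<close>] \<open>finite A\<close>])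
    also have "\<dots> = (\<Sum>v\<in>A. c * h v)"
      by (intro sum.cong refl) (simp add: fiber)
    finally show ?thesis .
  qed
  have "real (card (dtuples A k)) = card A * c"
    using group[of "\<lambda>_. 1"] by simp
  then show ?thesis
    using group[of g] assms(1,2) by (simp add: sum_distrib_left)
qed

lemma pmf_expectation_ge:
  fixes g :: "'a \<Rightarrow> real"
  assumes "finite A" and "set_pmf P \<subseteq> A" and "\<And>x. x \<in> set_pmf P \<Longrightarrow> c \<le> g x"
  shows "c \<le> (\<Sum>x\<in>A. pmf P x * g x)"
proof -
  have "c = (\<Sum>x\<in>A. pmf P x * c)"
    using sum_pmf_eq_1[OF assms(1,2)] by (simp add: sum_distrib_right[symmetric])
  also have "\<dots> \<le> (\<Sum>x\<in>A. pmf P x * g x)"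
  proof (rule sum_mono)
    fix x
    show "pmf P x * c \<le> pmf P x * g x"
      using assms(3)[of x] by (cases "x \<in> set_pmf P") (auto simp: set_pmf_iff intro: mult_left_mono)
  qed
  finally show ?thesis .
qed

text \<open>For every initial distribution in \<open>init_dists\<close> and every type \<open>a\<close>, the vertex
  carrying \<open>a\<close> among the \<open>card \<tau>\<close> pinned vertices is uniformly distributed over \<open>V\<close>.\<close>

lemma init_dists_expectation_ge:
  fixes g :: "('v \<Rightarrow> 't) \<Rightarrow> real" and c :: "'v \<Rightarrow> real"
  assumes "finite V" "V \<noteq> {}" "finite \<tau>" "a \<in> \<tau>" and D: "D \<in> init_dists V \<tau>"
    and g_ge: "\<And>M v. M \<in> states V \<tau> \<Longrightarrow> v \<in> V \<Longrightarrow> M v = a \<Longrightarrow> c v \<le> g M"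
  shows "(\<Sum>v\<in>V. c v) / card V \<le> (\<Sum>M\<in>states V \<tau>. pmf D M * g M)"
proof -
  define k where "k = card \<tau>"
  define U where "U = dtuples V k"
  define \<Gamma> where "\<Gamma> = dtuples \<tau> k"
  obtain Df where supp: "\<And>u \<gamma>. u \<in> U \<Longrightarrow> \<gamma> \<in> \<Gamma> \<Longrightarrow> set_pmf (Df u \<gamma>) \<subseteq> states_fixed V \<tau> u \<gamma>"
    and pmf_D: "\<And>S. pmf D S = 1 / card (U \<times> \<Gamma>) * (\<Sum>(u, \<gamma>)\<in>U \<times> \<Gamma>. pmf (Df u \<gamma>) S)"
    using D unfolding init_dists_def U_def \<Gamma>_def k_def by blast
  have finite_states: "finite (states V \<tau>)"
    using assms(1,3) by (simp add: states_def finite_PiE)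
  have card_U\<Gamma>: "real (card U) * card \<Gamma> \<noteq> 0"
  proof
    assume "real (card U) * card \<Gamma> = 0"
    then have "pmf D S = 0" for S by (simp add: pmf_D card_cartesian_product)
    then show False using set_pmf_not_empty[of D] by (auto simp: set_pmf_iff)
  qed
  define pos where "pos \<gamma> = (SOME i. i < k \<and> \<gamma> ! i = a)" for \<gamma> :: "'t list"
  have pos: "pos \<gamma> < k \<and> \<gamma> ! pos \<gamma> = a" if "\<gamma> \<in> \<Gamma>" for \<gamma>
    unfolding pos_def
  proof (rule someI_ex[of "\<lambda>i. i < k \<and> \<gamma> ! i = a"])
    show "\<exists>i. i < k \<and> \<gamma> ! i = a"
      using dtuples_card_index[OF assms(3) _ \<open>a \<in> \<tau>\<close>] that by (simp add: \<Gamma>_def k_def)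
  qed
  have pair_ge: "c (u ! pos \<gamma>) \<le> (\<Sum>M\<in>states V \<tau>. pmf (Df u \<gamma>) M * g M)"
    if u: "u \<in> U" and \<gamma>: "\<gamma> \<in> \<Gamma>" for u \<gamma>
  proof (rule pmf_expectation_ge[OF finite_states])
    show "set_pmf (Df u \<gamma>) \<subseteq> states V \<tau>"
      using supp[OF u \<gamma>] by (auto simp: states_fixed_def)
    fix M assume "M \<in> set_pmf (Df u \<gamma>)"
    then have "M \<in> states_fixed V \<tau> u \<gamma>" using supp[OF u \<gamma>] by blast
    moreover have "pos \<gamma> < length u" "u ! pos \<gamma> \<in> V"
      using u pos[OF \<gamma>] dtuples_nth_in by (auto simp: U_def dtuples_def)
    ultimately show "c (u ! pos \<gamma>) \<le> g M"
      using g_ge pos[OF \<gamma>] by (auto simp: states_fixed_def)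
  qed
  have "(\<Sum>(u, \<gamma>)\<in>U \<times> \<Gamma>. c (u ! pos \<gamma>)) = (\<Sum>\<gamma>\<in>\<Gamma>. \<Sum>u\<in>U. c (u ! pos \<gamma>))"
    by (simp add: sum.cartesian_product[symmetric] sum.swap[of _ U])
  also have "\<dots> = card U * card \<Gamma> * ((\<Sum>v\<in>V. c v) / card V)"
    using pos sum_dtuples_nth[OF assms(1,2)] by (simp add: U_def)
  finally have "(\<Sum>v\<in>V. c v) / card V = (\<Sum>(u, \<gamma>)\<in>U \<times> \<Gamma>. c (u ! pos \<gamma>)) / (card U * card \<Gamma>)"
    using card_U\<Gamma> by simp
  also have "\<dots> \<le> (\<Sum>(u, \<gamma>)\<in>U \<times> \<Gamma>. \<Sum>M\<in>states V \<tau>. pmf (Df u \<gamma>) M * g M) / (card U * card \<Gamma>)"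
    by (intro divide_right_mono sum_mono) (auto intro: pair_ge)
  also have "\<dots> = (\<Sum>M\<in>states V \<tau>. pmf D M * g M)"
    by (simp add: pmf_D card_cartesian_product sum_distrib_left sum_distrib_right
        sum_divide_distrib case_prod_unfold sum.swap[of _ "states V \<tau>"])
  finally show ?thesis .
qed

locale moran_process =
  fixes V :: "'v set" and E :: "'v \<Rightarrow> 'v \<Rightarrow> bool" and \<tau> :: "'t set"
    and f :: "'t \<Rightarrow> real" and \<alpha> :: 't
  assumes connected: "connected_graph V E"
    and finite_types: "finite \<tau>"
    and fitness_pos: "\<And>i. i \<in> \<tau> \<Longrightarrow> f i > 0"
    and alpha_fittest: "\<alpha> \<in> fittest \<tau> f"
begin

abbreviation \<Omega> :: "('v \<Rightarrow> 't) set" where "\<Omega> \<equiv> states V \<tau>"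

lemma is_graph: "graph V E"
  using connected by (simp add: connected_graph_def)

lemma finite_V: "finite V" and V_nonempty: "V \<noteq> {}"
  using connected by (auto simp: connected_graph_def graph_def)

lemma card_V_pos: "card V > 0"
  using finite_V V_nonempty by (simp add: card_gt_0_iff)

lemma alpha_in_types: "\<alpha> \<in> \<tau>" and fitness_le_alpha: "i \<in> \<tau> \<Longrightarrow> f i \<le> f \<alpha>"
  using alpha_fittest by (auto simp: fittest_def)

lemma finite_states: "finite \<Omega>"
  using finite_V finite_types by (simp add: states_def finite_PiE)

lemma state_in_types: "S \<in> \<Omega> \<Longrightarrow> v \<in> V \<Longrightarrow> S v \<in> \<tau>"
  by (auto simp: states_def)

lemma states_eqI: "S \<in> \<Omega> \<Longrightarrow> T \<in> \<Omega> \<Longrightarrow> (\<And>v. v \<in> V \<Longrightarrow> S v = T v) \<Longrightarrow> S = T"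
  unfolding states_def by (rule PiE_ext) auto

lemma nbhd_subset: "nbhd V E v \<subseteq> V"
  by (auto simp: nbhd_def)

lemma finite_nbhd: "finite (nbhd V E v)"
  using finite_subset[OF nbhd_subset finite_V] .

lemma nbhd_sym: "w \<in> nbhd V E v \<Longrightarrow> v \<in> nbhd V E w"
  using is_graph by (auto simp: nbhd_def graph_def)

lemma card_nbhd_le: "card (nbhd V E v) \<le> card V"
  by (rule card_mono[OF finite_V nbhd_subset])

lemma card_nbhd_pos: "w \<in> nbhd V E v \<Longrightarrow> card (nbhd V E v) > 0"
  using finite_nbhd card_gt_0_iff by blast

lemma nbhd_in_V: "w \<in> nbhd V E v \<Longrightarrow> w \<in> V"
  by (simp add: nbhd_def)

lemma nbhd_center_in_V: "w \<in> nbhd V E v \<Longrightarrow> v \<in> V"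
  using nbhd_sym nbhd_in_V by blast

lemma move_in_states [simp]: "S \<in> \<Omega> \<Longrightarrow> w \<in> nbhd V E v \<Longrightarrow> S(w := S v) \<in> \<Omega>"
  using nbhd_subset nbhd_center_in_V[of w v] state_in_types[of S v]
  by (auto simp: states_def PiE_def extensional_def)

definition total_fitness :: "('v \<Rightarrow> 't) \<Rightarrow> real" where
  "total_fitness S = (\<Sum>u\<in>V. f (S u))"

lemma total_fitness_pos: "S \<in> \<Omega> \<Longrightarrow> total_fitness S > 0"
  unfolding total_fitness_def
  using finite_V V_nonempty fitness_pos state_in_types by (intro sum_pos) auto

lemma total_fitness_le: "S \<in> \<Omega> \<Longrightarrow> total_fitness S \<le> card V * f \<alpha>"
  using sum_mono[of V "\<lambda>u. f (S u)" "\<lambda>_. f \<alpha>"] fitness_le_alpha state_in_types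
  by (simp add: total_fitness_def)

lemma selection_weight_nonneg: "S \<in> \<Omega> \<Longrightarrow> v \<in> V \<Longrightarrow> f (S v) / total_fitness S \<ge> 0"
  using fitness_pos[OF state_in_types] total_fitness_pos by (simp add: less_imp_le)

definition trans_op :: "(('v \<Rightarrow> 't) \<Rightarrow> real) \<Rightarrow> ('v \<Rightarrow> 't) \<Rightarrow> real" where
  "trans_op g S = (\<Sum>v\<in>V. f (S v) / total_fitness S *
     (if nbhd V E v = {} then g S
      else (\<Sum>w\<in>nbhd V E v. g (S(w := S v))) / card (nbhd V E v)))"

lemma trans_op_local:
  assumes "g S = h S" and "\<And>v w. v \<in> V \<Longrightarrow> w \<in> nbhd V E v \<Longrightarrow> g (S(w := S v)) = h (S(w := S v))"
  shows "trans_op g S = trans_op h S"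
  unfolding trans_op_def using assms by (auto intro!: sum.cong)

lemma trans_op_cong: "(\<And>T. T \<in> \<Omega> \<Longrightarrow> g T = h T) \<Longrightarrow> S \<in> \<Omega> \<Longrightarrow> trans_op g S = trans_op h S"
  by (rule trans_op_local) auto

lemma trans_op_const: "S \<in> \<Omega> \<Longrightarrow> trans_op (\<lambda>_. c) S = c"
proof -
  assume S: "S \<in> \<Omega>"
  have "trans_op (\<lambda>_. c) S = (\<Sum>v\<in>V. f (S v)) / total_fitness S * c"
    unfolding trans_op_def sum_divide_distrib sum_distrib_right
    using finite_nbhd by (intro sum.cong) (auto simp: card_gt_0_iff)
  then show ?thesis
    using total_fitness_pos[OF S] by (simp add: total_fitness_def)
qed

lemma trans_op_diff: "trans_op (\<lambda>T. g T - h T) S = trans_op g S - trans_op h S"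
  unfolding trans_op_def sum_subtractf[symmetric]
  by (intro sum.cong) (auto simp: sum_subtractf diff_divide_distrib right_diff_distrib)

lemma trans_op_cmult: "trans_op (\<lambda>T. c * g T) S = c * trans_op g S"
  unfolding trans_op_def sum_distrib_left
  by (intro sum.cong) (auto simp: sum_distrib_left[symmetric])

lemma trans_op_mono:
  assumes "\<And>T. T \<in> \<Omega> \<Longrightarrow> g T \<le> h T" and S: "S \<in> \<Omega>"
  shows "trans_op g S \<le> trans_op h S"
  unfolding trans_op_def
proof (intro sum_mono mult_left_mono selection_weight_nonneg[OF S])
  fix v assume v: "v \<in> V"
  have "(\<Sum>w\<in>nbhd V E v. g (S(w := S v))) \<le> (\<Sum>w\<in>nbhd V E v. h (S(w := S v)))"
    using assms v by (intro sum_mono) auto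
  then show "(if nbhd V E v = {} then g S else (\<Sum>w\<in>nbhd V E v. g (S(w := S v))) / card (nbhd V E v))
    \<le> (if nbhd V E v = {} then h S else (\<Sum>w\<in>nbhd V E v. h (S(w := S v))) / card (nbhd V E v))"
    using assms by (simp add: divide_right_mono)
qed

lemma trans_op_nonneg: "(\<And>T. T \<in> \<Omega> \<Longrightarrow> g T \<ge> 0) \<Longrightarrow> S \<in> \<Omega> \<Longrightarrow> trans_op g S \<ge> 0"
  using trans_op_mono[of "\<lambda>_. 0" g S] trans_op_const[of S 0] by simp

lemma trans_op_ge_move:
  assumes g: "\<And>T. T \<in> \<Omega> \<Longrightarrow> g T \<ge> 0" and S: "S \<in> \<Omega>" and v: "v \<in> V" and w: "w \<in> nbhd V E v"
  shows "f (S v) / total_fitness S / card (nbhd V E v) * g (S(w := S v)) \<le> trans_op g S"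
proof -
  let ?term = "\<lambda>u. f (S u) / total_fitness S *
    (if nbhd V E u = {} then g S else (\<Sum>w\<in>nbhd V E u. g (S(w := S u))) / card (nbhd V E u))"
  have "g (S(w := S v)) \<le> (\<Sum>w\<in>nbhd V E v. g (S(w := S v)))"
    using g S v w finite_nbhd by (intro member_le_sum) auto
  then have "g (S(w := S v)) / card (nbhd V E v) \<le> (\<Sum>w\<in>nbhd V E v. g (S(w := S v))) / card (nbhd V E v)"
    by (rule divide_right_mono) simp
  then have "f (S v) / total_fitness S * (g (S(w := S v)) / card (nbhd V E v))
      \<le> f (S v) / total_fitness S * ((\<Sum>w\<in>nbhd V E v. g (S(w := S v))) / card (nbhd V E v))"
    by (rule mult_left_mono[OF _ selection_weight_nonneg[OF S v]])
  also have "\<dots> = ?term v"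
    using w by auto
  also have "\<dots> \<le> (\<Sum>u\<in>V. ?term u)"
  proof (rule member_le_sum[OF v _ finite_V])
    fix u assume "u \<in> V - {v}"
    then have u: "u \<in> V" by simp
    have "(if nbhd V E u = {} then g S else (\<Sum>w\<in>nbhd V E u. g (S(w := S u))) / card (nbhd V E u)) \<ge> 0"
      using g S u by (auto intro!: sum_nonneg divide_nonneg_nonneg)
    then show "?term u \<ge> 0" using selection_weight_nonneg[OF S u] by (rule mult_nonneg_nonneg[rotated])
  qed
  finally show ?thesis by (simp add: trans_op_def)
qed

lemma trans_op_iter_mono:
  "(\<And>T. T \<in> \<Omega> \<Longrightarrow> g T \<le> h T) \<Longrightarrow> S \<in> \<Omega> \<Longrightarrow> (trans_op ^^ t) g S \<le> (trans_op ^^ t) h S"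
  by (induction t arbitrary: S) (auto intro!: trans_op_mono)

lemma trans_op_iter_const: "S \<in> \<Omega> \<Longrightarrow> (trans_op ^^ t) (\<lambda>_. c) S = c"
proof (induction t arbitrary: S)
  case (Suc t)
  then have "(trans_op ^^ Suc t) (\<lambda>_. c) S = trans_op (\<lambda>_. c) S"
    using trans_op_cong[OF Suc.IH] by simp
  then show ?case using trans_op_const Suc by simp
qed simp

lemma trans_op_iter_diff:
  "(trans_op ^^ t) (\<lambda>T. g T - h T) S = (trans_op ^^ t) g S - (trans_op ^^ t) h S"
proof (induction t arbitrary: S)
  case (Suc t)
  then have "(trans_op ^^ t) (\<lambda>T. g T - h T) = (\<lambda>T. (trans_op ^^ t) g T - (trans_op ^^ t) h T)"
    by (simp add: fun_eq_iff)
  then show ?case by (simp add: trans_op_diff)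
qed simp

lemma trans_op_iter_cmult: "(trans_op ^^ t) (\<lambda>T. c * g T) S = c * (trans_op ^^ t) g S"
proof (induction t arbitrary: S)
  case (Suc t)
  then have "(trans_op ^^ t) (\<lambda>T. c * g T) = (\<lambda>T. c * (trans_op ^^ t) g T)"
    by (simp add: fun_eq_iff)
  then show ?case by (simp add: trans_op_cmult)
qed simp

lemma trans_op_iter_nonneg:
  "(\<And>T. T \<in> \<Omega> \<Longrightarrow> g T \<ge> 0) \<Longrightarrow> S \<in> \<Omega> \<Longrightarrow> (trans_op ^^ t) g S \<ge> 0"
  using trans_op_iter_mono[of "\<lambda>_. 0" g S t] trans_op_iter_const[of S t 0] by simp

lemma sum_moran_trans:
  assumes R: "R \<in> \<Omega>"
  shows "(\<Sum>S\<in>\<Omega>. moran_trans V E f R S * g S) = trans_op g R"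
proof -
  have pick: "(\<Sum>S\<in>\<Omega>. (if S = T then 1 else 0) * g S) = g T" if "T \<in> \<Omega>" for T
    using that finite_states by (simp add: if_distrib[of "\<lambda>x. x * _"] cong: if_cong)
  have step: "(\<Sum>S\<in>\<Omega>. (if nbhd V E v = {} then (if S = R then 1 else 0)
        else (\<Sum>w\<in>nbhd V E v. (if S = R(w := R v) then 1 else 0) / card (nbhd V E v))) * g S)
      = (if nbhd V E v = {} then g R else (\<Sum>w\<in>nbhd V E v. g (R(w := R v))) / card (nbhd V E v))"
    for v
  proof (cases "nbhd V E v = {}")
    case False
    have "(\<Sum>S\<in>\<Omega>. (\<Sum>w\<in>nbhd V E v. (if S = R(w := R v) then 1 else 0) / card (nbhd V E v)) * g S)
        = (\<Sum>w\<in>nbhd V E v. (\<Sum>S\<in>\<Omega>. (if S = R(w := R v) then 1 else 0) * g S)) / card (nbhd V E v)"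
      by (simp add: sum_distrib_right sum_divide_distrib sum.swap[of _ \<Omega>])
    also have "\<dots> = (\<Sum>w\<in>nbhd V E v. g (R(w := R v))) / card (nbhd V E v)"
      using R by (simp add: pick)
    finally show ?thesis using False by simp
  qed (simp add: pick R)
  show ?thesis
    unfolding moran_trans_def trans_op_def total_fitness_def sum_distrib_right
    by (subst sum.swap) (simp only: mult.assoc sum_distrib_left[symmetric] step)
qed

lemma sum_moran_pt:
  "S0 \<in> \<Omega> \<Longrightarrow> (\<Sum>S\<in>\<Omega>. moran_pt V E \<tau> f t S0 S * g S) = (trans_op ^^ t) g S0"
proof (induction t arbitrary: g)
  case 0
  then show ?case
    using finite_states by (simp add: if_distrib[of "\<lambda>x. x * _"] cong: if_cong)
next
  case (Suc t)
  have "(\<Sum>S\<in>\<Omega>. moran_pt V E \<tau> f (Suc t) S0 S * g S)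
      = (\<Sum>R\<in>\<Omega>. moran_pt V E \<tau> f t S0 R * (\<Sum>S\<in>\<Omega>. moran_trans V E f R S * g S))"
    by (simp add: sum_distrib_right sum_distrib_left mult.assoc) (rule sum.swap)
  also have "\<dots> = (\<Sum>R\<in>\<Omega>. moran_pt V E \<tau> f t S0 R * trans_op g R)"
    by (simp add: sum_moran_trans)
  also have "\<dots> = (trans_op ^^ Suc t) g S0"
    using Suc by (simp add: funpow_Suc_right del: funpow.simps)
  finally show ?case .
qed

definition subharmonic :: "(('v \<Rightarrow> 't) \<Rightarrow> real) \<Rightarrow> bool" where
  "subharmonic g \<longleftrightarrow> (\<forall>S\<in>\<Omega>. g S \<le> trans_op g S)"

lemma subharmonic_iter_Suc_ge:
  "subharmonic g \<Longrightarrow> S \<in> \<Omega> \<Longrightarrow> (trans_op ^^ t) g S \<le> (trans_op ^^ Suc t) g S"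
  unfolding funpow_Suc_right comp_def subharmonic_def by (rule trans_op_iter_mono) auto

lemma subharmonic_le_iter: "subharmonic g \<Longrightarrow> S \<in> \<Omega> \<Longrightarrow> g S \<le> (trans_op ^^ t) g S"
  using subharmonic_iter_Suc_ge by (induction t) (auto intro: order_trans)

lemma subharmonic_iter_incseq: "subharmonic g \<Longrightarrow> S \<in> \<Omega> \<Longrightarrow> incseq (\<lambda>t. (trans_op ^^ t) g S)"
  by (rule incseq_SucI) (rule subharmonic_iter_Suc_ge)

lemma subharmonic_indicator:
  assumes closed: "\<And>S v w. S \<in> \<Omega> \<Longrightarrow> P S \<Longrightarrow> w \<in> nbhd V E v \<Longrightarrow> P (S(w := S v))"
  shows "subharmonic (\<lambda>S. of_bool (P S))"
  unfolding subharmonic_def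
proof
  fix S assume S: "S \<in> \<Omega>"
  show "of_bool (P S) \<le> trans_op (\<lambda>S. of_bool (P S)) S"
  proof (cases "P S")
    case True
    then have "trans_op (\<lambda>S. of_bool (P S)) S = trans_op (\<lambda>_. 1) S"
      using closed S by (intro trans_op_local) auto
    then show ?thesis using True trans_op_const[OF S] by simp
  qed (use S in \<open>auto intro: trans_op_nonneg\<close>)
qed

text \<open>The \<open>max\<close> only matters for the isolated vertex of the one-vertex graph.\<close>

definition inv_degree :: "'v \<Rightarrow> real" where
  "inv_degree v = 1 / max 1 (card (nbhd V E v))"

definition potential :: "('v \<Rightarrow> 't) \<Rightarrow> real" where
  "potential S = (\<Sum>v\<in>V. if S v = \<alpha> then inv_degree v else 0)"

definition total_inv_degree :: real where
  "total_inv_degree = (\<Sum>v\<in>V. inv_degree v)"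

lemma inv_degree_pos: "inv_degree v > 0"
  by (simp add: inv_degree_def)

lemma inv_degree_eq: "nbhd V E v \<noteq> {} \<Longrightarrow> inv_degree v = 1 / card (nbhd V E v)"
  using finite_nbhd by (simp add: inv_degree_def max_def card_gt_0_iff Suc_le_eq)

lemma total_inv_degree_pos: "total_inv_degree > 0"
  unfolding total_inv_degree_def using finite_V V_nonempty inv_degree_pos by (simp add: sum_pos)

lemma potential_upd:
  assumes "w \<in> V"
  shows "potential (S(w := x)) =
    potential S - (if S w = \<alpha> then inv_degree w else 0) + (if x = \<alpha> then inv_degree w else 0)"
proof -
  let ?rest = "\<Sum>v\<in>V - {w}. if S v = \<alpha> then inv_degree v else 0"
  have "potential (S(w := x)) = (if x = \<alpha> then inv_degree w else 0) + ?rest"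
    unfolding potential_def using assms finite_V by (subst sum.remove[of V w]) (auto intro!: sum.cong)
  moreover have "potential S = (if S w = \<alpha> then inv_degree w else 0) + ?rest"
    unfolding potential_def using assms finite_V by (subst sum.remove[of V w]) auto
  ultimately show ?thesis by simp
qed

lemma potential_ge: "v \<in> V \<Longrightarrow> M v = \<alpha> \<Longrightarrow> inv_degree v \<le> potential M"
  unfolding potential_def
  using member_le_sum[of v V "\<lambda>v. if M v = \<alpha> then inv_degree v else 0"] finite_V inv_degree_pos
  by (simp add: less_imp_le)

lemma trans_op_potential_increment:
  assumes S: "S \<in> \<Omega>"
  shows "trans_op potential S - potential S =
    (\<Sum>v\<in>V. \<Sum>w\<in>nbhd V E v. if S v = \<alpha> \<and> S w \<noteq> \<alpha>
       then (f \<alpha> - f (S w)) * inv_degree v * inv_degree w else 0) / total_fitness S"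
proof -
  define gain where "gain v w =
    (if S v = \<alpha> \<and> S w \<noteq> \<alpha> then f \<alpha> * inv_degree v * inv_degree w else 0)" for v w
  define loss where "loss v w =
    (if S v \<noteq> \<alpha> \<and> S w = \<alpha> then f (S v) * inv_degree v * inv_degree w else 0)" for v w
  have "trans_op potential S - potential S = trans_op (\<lambda>T. potential T - potential S) S"
    using trans_op_diff[of potential "\<lambda>_. potential S" S] trans_op_const[OF S] by simp
  also have "\<dots> = (\<Sum>v\<in>V. \<Sum>w\<in>nbhd V E v.
      f (S v) * inv_degree v * (potential (S(w := S v)) - potential S)) / total_fitness S"
    unfolding trans_op_def sum_divide_distrib[of _ V]
  proof (intro sum.cong refl)
    fix v
    show "f (S v) / total_fitness S * (if nbhd V E v = {} then potential S - potential S
          else (\<Sum>w\<in>nbhd V E v. potential (S(w := S v)) - potential S) / card (nbhd V E v))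
        = (\<Sum>w\<in>nbhd V E v. f (S v) * inv_degree v * (potential (S(w := S v)) - potential S))
          / total_fitness S"
      by (cases "nbhd V E v = {}")
        (simp_all add: inv_degree_eq sum_distrib_left[symmetric] sum_divide_distrib[symmetric])
  qed
  also have "\<dots> = (\<Sum>v\<in>V. \<Sum>w\<in>nbhd V E v. gain v w - loss v w) / total_fitness S"
  proof (intro arg_cong[where f = "\<lambda>x. x / total_fitness S"] sum.cong refl)
    fix v w assume "w \<in> nbhd V E v"
    then have "potential (S(w := S v)) - potential S =
        (if S v = \<alpha> then inv_degree w else 0) - (if S w = \<alpha> then inv_degree w else 0)"
      using potential_upd[OF nbhd_in_V, of w v S "S v"] by simp
    then show "f (S v) * inv_degree v * (potential (S(w := S v)) - potential S) = gain v w - loss v w"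
      by (cases "S v = \<alpha>"; cases "S w = \<alpha>") (simp_all add: gain_def loss_def)
  qed
  also have "\<dots> = (\<Sum>v\<in>V. \<Sum>w\<in>nbhd V E v. gain v w - loss w v) / total_fitness S"
    using sum_nbhd_swap[OF is_graph, of loss] by (simp add: sum_subtractf)
  also have "\<dots> = (\<Sum>v\<in>V. \<Sum>w\<in>nbhd V E v. if S v = \<alpha> \<and> S w \<noteq> \<alpha>
       then (f \<alpha> - f (S w)) * inv_degree v * inv_degree w else 0) / total_fitness S"
    by (intro arg_cong[where f = "\<lambda>x. x / total_fitness S"] sum.cong refl)
      (simp add: gain_def loss_def algebra_simps)
  finally show ?thesis .
qed

lemma subharmonic_potential: "subharmonic potential"
  unfolding subharmonic_def
proof
  fix S assume S: "S \<in> \<Omega>"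
  have "(\<Sum>v\<in>V. \<Sum>w\<in>nbhd V E v. if S v = \<alpha> \<and> S w \<noteq> \<alpha>
      then (f \<alpha> - f (S w)) * inv_degree v * inv_degree w else 0) \<ge> 0"
    using fitness_le_alpha state_in_types[OF S] nbhd_in_V inv_degree_pos
    by (intro sum_nonneg) (auto intro!: mult_nonneg_nonneg simp: less_imp_le)
  then have "trans_op potential S - potential S \<ge> 0"
    unfolding trans_op_potential_increment[OF S] using total_fitness_pos[OF S] by simp
  then show "potential S \<le> trans_op potential S" by simp
qed

definition ind_fixated :: "('v \<Rightarrow> 't) \<Rightarrow> real" where
  "ind_fixated S = of_bool (S = (\<lambda>v\<in>V. \<alpha>))"

definition ind_extinct :: "('v \<Rightarrow> 't) \<Rightarrow> real" where
  "ind_extinct S = of_bool (\<alpha> \<notin> S ` V)"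

definition ind_mixed :: "('v \<Rightarrow> 't) \<Rightarrow> real" where
  "ind_mixed S = 1 - ind_fixated S - ind_extinct S"

lemma fixated_in_states: "(\<lambda>v\<in>V. \<alpha>) \<in> \<Omega>"
  using alpha_in_types by (simp add: states_def)

lemma ind_fixated_fixated: "ind_fixated (\<lambda>v\<in>V. \<alpha>) = 1"
  by (simp add: ind_fixated_def)

lemma subharmonic_ind_fixated: "subharmonic ind_fixated"
  unfolding ind_fixated_def[abs_def]
  by (rule subharmonic_indicator) (auto simp: fun_eq_iff dest: nbhd_in_V nbhd_center_in_V)

lemma subharmonic_ind_extinct: "subharmonic ind_extinct"
  unfolding ind_extinct_def[abs_def]
  by (rule subharmonic_indicator) (auto dest: nbhd_center_in_V)

lemma trans_op_iter_ind_mixed: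
  "S \<in> \<Omega> \<Longrightarrow> (trans_op ^^ t) ind_mixed S =
    1 - (trans_op ^^ t) ind_fixated S - (trans_op ^^ t) ind_extinct S"
  unfolding ind_mixed_def
  using trans_op_iter_diff[of t "\<lambda>T. 1 - ind_fixated T" ind_extinct S]
    trans_op_iter_diff[of t "\<lambda>_. 1" ind_fixated S] trans_op_iter_const[of S t 1]
  by simp

definition min_invasion_prob :: real where
  "min_invasion_prob = 1 / real (card V) ^ 2"

lemma min_invasion_prob_pos: "min_invasion_prob > 0"
  using card_V_pos by (simp add: min_invasion_prob_def)

lemma min_invasion_prob_le_1: "min_invasion_prob \<le> 1"
  using card_V_pos by (simp add: min_invasion_prob_def field_simps)

lemma invasion_prob_ge:
  assumes S: "S \<in> \<Omega>" and w: "w \<in> nbhd V E v" and "S v = \<alpha>"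
  shows "min_invasion_prob \<le> f (S v) / total_fitness S / card (nbhd V E v)"
proof -
  have "1 / card V \<le> f \<alpha> / total_fitness S"
    using total_fitness_le[OF S] total_fitness_pos[OF S] fitness_pos[OF alpha_in_types] card_V_pos
    by (simp add: field_simps)
  moreover have "1 / card V \<le> 1 / card (nbhd V E v)"
    using card_nbhd_pos[OF w] card_nbhd_le by (simp add: frac_le)
  ultimately have "1 / card V * (1 / card V) \<le> f \<alpha> / total_fitness S * (1 / card (nbhd V E v))"
    using card_V_pos total_fitness_pos[OF S] fitness_pos[OF alpha_in_types] by (intro mult_mono) auto
  then show ?thesis
    using \<open>S v = \<alpha>\<close> by (simp add: min_invasion_prob_def power2_eq_square)
qed

text \<open>Induction on the number of non-\<open>\<alpha>\<close> vertices: some \<open>\<alpha>\<close>-vertex has a non-\<open>\<alpha>\<close>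
  neighbour, and it invades that neighbour with probability at least \<open>min_invasion_prob\<close>.\<close>

lemma fixation_reachable:
  "S \<in> \<Omega> \<Longrightarrow> \<alpha> \<in> S ` V \<Longrightarrow> card {v \<in> V. S v \<noteq> \<alpha>} \<le> j \<Longrightarrow>
    min_invasion_prob ^ j \<le> (trans_op ^^ j) ind_fixated S"
proof (induction j arbitrary: S)
  case 0
  then have "S = (\<lambda>v\<in>V. \<alpha>)"
    using finite_V by (intro states_eqI[OF _ fixated_in_states]) auto
  then have "ind_fixated S = 1" by (simp only: ind_fixated_fixated)
  then show ?case by simp
next
  case (Suc j)
  show ?case
  proof (cases "\<exists>y\<in>V. S y \<noteq> \<alpha>")
    case False
    then have "S = (\<lambda>v\<in>V. \<alpha>)"
      using Suc.prems by (intro states_eqI[OF _ fixated_in_states]) auto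
    then have "ind_fixated S = 1" by (simp only: ind_fixated_fixated)
    then have "1 \<le> (trans_op ^^ Suc j) ind_fixated S"
      using subharmonic_le_iter[OF subharmonic_ind_fixated Suc.prems(1), of "Suc j"] by simp
    moreover have "min_invasion_prob ^ Suc j \<le> 1"
      using min_invasion_prob_pos min_invasion_prob_le_1 by (intro power_le_one) auto
    ultimately show ?thesis by linarith
  next
    case True
    then obtain v w where w: "w \<in> nbhd V E v" and "S v = \<alpha>" "S w \<noteq> \<alpha>"
      using connected_graph_edge_across[OF connected, of _ "\<lambda>v. S v = \<alpha>"] Suc.prems(2) by blast
    define S' where "S' = S(w := S v)"
    have S': "S' \<in> \<Omega>" using Suc.prems(1) w by (simp add: S'_def)
    have "v \<noteq> w" using \<open>S v = \<alpha>\<close> \<open>S w \<noteq> \<alpha>\<close> by auto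
    then have "\<alpha> \<in> S' ` V" using \<open>S v = \<alpha>\<close> nbhd_center_in_V[OF w] by (force simp: S'_def)
    moreover have "{u \<in> V. S' u \<noteq> \<alpha>} = {u \<in> V. S u \<noteq> \<alpha>} - {w}"
      using \<open>S v = \<alpha>\<close> by (auto simp: S'_def)
    then have "card {u \<in> V. S' u \<noteq> \<alpha>} \<le> j"
      using Suc.prems(3) nbhd_in_V[OF w] \<open>S w \<noteq> \<alpha>\<close> finite_V by simp
    ultimately have IH: "min_invasion_prob ^ j \<le> (trans_op ^^ j) ind_fixated S'"
      using Suc.IH S' by blast
    have "min_invasion_prob ^ Suc j \<le>
        f (S v) / total_fitness S / card (nbhd V E v) * (trans_op ^^ j) ind_fixated S'"
      unfolding power_Suc
      using invasion_prob_ge[OF Suc.prems(1) w \<open>S v = \<alpha>\<close>] IH min_invasion_prob_pos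
      by (intro mult_mono) auto
    also have "\<dots> \<le> (trans_op ^^ Suc j) ind_fixated S"
      unfolding S'_def funpow.simps comp_def
      by (rule trans_op_ge_move[OF _ Suc.prems(1) nbhd_center_in_V[OF w] w])
        (auto intro: trans_op_iter_nonneg simp: ind_fixated_def)
    finally show ?thesis .
  qed
qed

lemma ind_mixed_iter_contract:
  assumes S: "S \<in> \<Omega>"
  shows "(trans_op ^^ card V) ind_mixed S \<le> (1 - min_invasion_prob ^ card V) * ind_mixed S"
proof -
  have fix_ge: "ind_fixated S \<le> (trans_op ^^ card V) ind_fixated S"
    and ext_ge: "ind_extinct S \<le> (trans_op ^^ card V) ind_extinct S"
    using subharmonic_le_iter[OF subharmonic_ind_fixated S] subharmonic_le_iter[OF subharmonic_ind_extinct S] .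
  have fix_nonneg: "(trans_op ^^ card V) ind_fixated S \<ge> 0"
    and ext_nonneg: "(trans_op ^^ card V) ind_extinct S \<ge> 0"
    using S by (auto intro!: trans_op_iter_nonneg simp: ind_fixated_def ind_extinct_def)
  consider "S = (\<lambda>v\<in>V. \<alpha>)" | "\<alpha> \<notin> S ` V" | "S \<noteq> (\<lambda>v\<in>V. \<alpha>)" "\<alpha> \<in> S ` V"
    by blast
  then show ?thesis
  proof cases
    case 1
    then have "ind_mixed S = 0" "ind_fixated S = 1"
      using V_nonempty by (auto simp: ind_mixed_def ind_fixated_def ind_extinct_def)
    then show ?thesis
      using fix_ge ext_nonneg trans_op_iter_ind_mixed[OF S] by simp
  next
    case 2
    then have "ind_mixed S = 0" "ind_extinct S = 1"
      using V_nonempty by (auto simp: ind_mixed_def ind_fixated_def ind_extinct_def)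
    then show ?thesis
      using ext_ge fix_nonneg trans_op_iter_ind_mixed[OF S] by simp
  next
    case 3
    then have "ind_mixed S = 1"
      by (simp add: ind_mixed_def ind_fixated_def ind_extinct_def)
    moreover have "card {v \<in> V. S v \<noteq> \<alpha>} \<le> card V"
      using finite_V by (intro card_mono) auto
    then have "min_invasion_prob ^ card V \<le> (trans_op ^^ card V) ind_fixated S"
      using fixation_reachable[OF S \<open>\<alpha> \<in> S ` V\<close>] by blast
    ultimately show ?thesis
      using ext_nonneg trans_op_iter_ind_mixed[OF S] by simp
  qed
qed

lemma ind_mixed_iter_decay:
  "S \<in> \<Omega> \<Longrightarrow> (trans_op ^^ (k * card V)) ind_mixed S \<le> (1 - min_invasion_prob ^ card V) ^ k"
proof (induction k arbitrary: S)
  case 0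
  then show ?case by (simp add: ind_mixed_def ind_fixated_def ind_extinct_def)
next
  case (Suc k)
  let ?q = "1 - min_invasion_prob ^ card V"
  have q_nonneg: "?q \<ge> 0"
    using min_invasion_prob_pos min_invasion_prob_le_1 by (simp add: power_le_one)
  have "(trans_op ^^ (Suc k * card V)) ind_mixed S
      = (trans_op ^^ (k * card V)) ((trans_op ^^ card V) ind_mixed) S"
    by (simp only: mult_Suc add.commute[of "card V"] funpow_add comp_def)
  also have "\<dots> \<le> (trans_op ^^ (k * card V)) (\<lambda>T. ?q * ind_mixed T) S"
    using Suc.prems by (intro trans_op_iter_mono ind_mixed_iter_contract)
  also have "\<dots> = ?q * (trans_op ^^ (k * card V)) ind_mixed S"
    by (rule trans_op_iter_cmult)
  also have "\<dots> \<le> ?q * ?q ^ k"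
    by (intro mult_left_mono Suc.IH Suc.prems q_nonneg)
  finally show ?case by simp
qed

lemma ind_mixed_iter_small:
  assumes "S \<in> \<Omega>" and "e > 0"
  obtains t where "(trans_op ^^ t) ind_mixed S \<le> e"
proof -
  let ?q = "1 - min_invasion_prob ^ card V"
  have "\<bar>?q\<bar> < 1"
    using min_invasion_prob_pos min_invasion_prob_le_1 by (simp add: power_le_one)
  then have "(\<lambda>k. ?q ^ k) \<longlonglongrightarrow> 0"
    by (intro LIMSEQ_power_zero) simp
  then obtain k where "?q ^ k < e"
    using \<open>e > 0\<close> by (metis LIMSEQ_D diff_zero real_norm_def abs_less_iff le_refl)
  with ind_mixed_iter_decay[OF \<open>S \<in> \<Omega>\<close>, of k] show ?thesis
    by (intro that[of "k * card V"]) simp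
qed

lemma potential_le_extinct: "potential T \<le> total_inv_degree * (1 - ind_extinct T)"
proof (cases "\<alpha> \<in> T ` V")
  case True
  have "potential T \<le> total_inv_degree"
    unfolding potential_def total_inv_degree_def
    using inv_degree_pos by (intro sum_mono) (simp add: less_imp_le)
  then show ?thesis using True by (simp add: ind_extinct_def)
next
  case False
  then have "potential T = 0" by (auto simp: potential_def intro!: sum.neutral)
  then show ?thesis using False by (simp add: ind_extinct_def)
qed

lemma moran_pt_fixated:
  "S0 \<in> \<Omega> \<Longrightarrow> moran_pt V E \<tau> f t S0 (\<lambda>v\<in>V. \<alpha>) = (trans_op ^^ t) ind_fixated S0"
  using sum_moran_pt[of S0 t ind_fixated] fixated_in_states finite_states
  by (simp add: ind_fixated_def sum_mult_of_bool_eq)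

lemma iter_ind_fixated_le_fix_prob:
  assumes S0: "S0 \<in> \<Omega>"
  shows "(trans_op ^^ t) ind_fixated S0 \<le> fix_prob V E \<tau> f \<alpha> S0"
proof -
  let ?X = "\<lambda>t. (trans_op ^^ t) ind_fixated S0"
  have "incseq ?X"
    by (rule subharmonic_iter_incseq[OF subharmonic_ind_fixated S0])
  moreover have "\<forall>t. ?X t \<le> 1"
    using trans_op_iter_mono[of ind_fixated "\<lambda>_. 1" S0] trans_op_iter_const[OF S0] S0
    by (simp add: ind_fixated_def)
  ultimately obtain L where L: "?X \<longlonglongrightarrow> L" "\<forall>t. ?X t \<le> L"
    by (rule incseq_convergent)
  then have "fix_prob V E \<tau> f \<alpha> S0 = L"
    unfolding fix_prob_def using moran_pt_fixated[OF S0] by (simp add: limI)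
  with L(2) show ?thesis by simp
qed

text \<open>Optional stopping for the bounded submartingale \<open>potential\<close>: the process is
  absorbed into fixation or extinction of \<open>\<alpha>\<close>, and \<open>potential\<close> vanishes on extinction.\<close>

lemma potential_le_fix_prob:
  assumes S0: "S0 \<in> \<Omega>"
  shows "potential S0 / total_inv_degree \<le> fix_prob V E \<tau> f \<alpha> S0"
proof (rule field_le_epsilon)
  fix e :: real assume e: "e > 0"
  obtain t where t: "(trans_op ^^ t) ind_mixed S0 \<le> e"
    using ind_mixed_iter_small[OF S0 e] .
  have "potential S0 \<le> (trans_op ^^ t) potential S0"
    by (rule subharmonic_le_iter[OF subharmonic_potential S0])
  also have "\<dots> \<le> (trans_op ^^ t) (\<lambda>T. total_inv_degree * (1 - ind_extinct T)) S0"
    by (rule trans_op_iter_mono[OF potential_le_extinct S0])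
  also have "\<dots> = total_inv_degree * ((trans_op ^^ t) ind_fixated S0 + (trans_op ^^ t) ind_mixed S0)"
    by (simp add: trans_op_iter_cmult trans_op_iter_diff trans_op_iter_const[OF S0]
        trans_op_iter_ind_mixed[OF S0])
  also have "\<dots> \<le> total_inv_degree * (fix_prob V E \<tau> f \<alpha> S0 + e)"
    using iter_ind_fixated_le_fix_prob[OF S0] t total_inv_degree_pos
    by (intro mult_left_mono add_mono) auto
  finally show "potential S0 / total_inv_degree \<le> fix_prob V E \<tau> f \<alpha> S0 + e"
    unfolding pos_divide_le_eq[OF total_inv_degree_pos] by (simp add: mult.commute)
qed

lemma fix_prob_dist_ge:
  assumes "D \<in> init_dists V \<tau>"
  shows "1 / card V \<le> fix_prob_dist V E \<tau> f \<alpha> D"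
proof -
  have "total_inv_degree / card V \<le> (\<Sum>M\<in>\<Omega>. pmf D M * potential M)"
    unfolding total_inv_degree_def
    using finite_V V_nonempty finite_types alpha_in_types assms potential_ge
    by (rule init_dists_expectation_ge)
  then have "1 / card V \<le> (\<Sum>M\<in>\<Omega>. pmf D M * potential M) / total_inv_degree"
    using total_inv_degree_pos by (simp add: field_simps)
  also have "\<dots> = (\<Sum>M\<in>\<Omega>. pmf D M * (potential M / total_inv_degree))"
    by (simp add: sum_divide_distrib)
  also have "\<dots> \<le> fix_prob_dist V E \<tau> f \<alpha> D"
    unfolding fix_prob_dist_def by (intro sum_mono mult_left_mono potential_le_fix_prob) auto
  finally show ?thesis .
qed

end

theorem corollary9:
  fixes V :: "'v set" and E :: "'v \<Rightarrow> 'v \<Rightarrow> bool"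
    and \<tau> :: "'t set" and f :: "'t \<Rightarrow> real" and \<alpha> :: 't and D :: "('v \<Rightarrow> 't) pmf"
  assumes "connected_graph V E"
    and "finite \<tau>"
    and "\<forall>i\<in>\<tau>. f i \<in> \<rat> \<and> f i \<ge> 1"
    and "\<alpha> \<in> fittest \<tau> f"
    and "D \<in> init_dists V \<tau>"
  shows "fix_prob_dist V E \<tau> f \<alpha> D \<ge> 1 / real (card V)"
proof -
  interpret moran_process V E \<tau> f \<alpha>
    using assms(1-4) by unfold_locales fastforce+
  show ?thesis
    using fix_prob_dist_ge[OF assms(5)] by simp
qed

end
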